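(* Let $\mathbf{X}\sim\mathcal{MSP}(\boldsymbol{\mu},\mathbf{K})$ be a $p$-variate $L^2$-continuous process on a compact interval $\mathcal{T}$, $P=\{1,\dots,p\}$, and let $(\pi_i,\boldsymbol{\psi}_i)$, $i=1,\dots,M$, be the $M$ largest eigenpairs of its covariance operator with $\pi_M>0$; write $\psi_{i,k}=\boldsymbol{\psi}_i'\mathbf{e}_k$. For $S\subseteq P$ let $\hat{\mathbf{X}}^S=(\hat X^S_1,\dots,\hat X^S_p)'$ with $\hat X^S_j=X_j$ if $j\in S$ and $\hat X^S_j=\mu_j$ if $j\notin S$, and let $\Delta_k\mathrm{fMMD}^2(\hat{\mathbf{X}}^S,\boldsymbol{\mu};\mathbf{K},M)=\mathrm{fMMD}^2(\hat{\mathbf{X}}^{S\cup\{k\}},\boldsymbol{\mu};\mathbf{K},M)-\mathrm{fMMD}^2(\hat{\mathbf{X}}^S,\boldsymbol{\mu};\mathbf{K},M)$. Then $$\theta_k(\mathbf{X},\boldsymbol{\mu};\mathbf{K},M):=\sum_{S\subseteq P\setminus\{k\}}\frac{|S|!(p-|S|-1)!}{p!}\Delta_k\mathrm{fMMD}^2(\hat{\mathbf{X}}^S,\boldsymbol{\mu};\mathbf{K},M)=\sum_{i=1}^M\frac{1}{\pi_i}\langle X_k-\mu_k,\psi_{i,k}\rangle\langle\mathbf{X}-\boldsymbol{\mu},\boldsymbol{\psi}_i\rangle.$$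
   Context: $\mathcal{H}=L^2(\mathcal{T})^p$ with $\langle\mathbf{x},\mathbf{y}\rangle=\sum_j\int_{\mathcal{T}}x_jy_j$; for scalar functions $\langle f,g\rangle=\int_{\mathcal{T}}fg$. $\mathbf{X}\sim\mathcal{MSP}(\boldsymbol{\mu},\mathbf{K})$: mean $\boldsymbol{\mu}(t)=E\mathbf{X}(t)$, covariance kernel $\mathbf{K}(s,t)=[\mathrm{Cov}(X_i(s),X_j(t))]$, covariance operator $\mathcal{C}\mathbf{x}(s)=\int\mathbf{K}(s,t)\mathbf{x}(t)dt$ with orthonormal eigenfunctions $\boldsymbol{\psi}_i$ and nonincreasing eigenvalues $\pi_i$. $\mathrm{fMMD}^2(\mathbf{Y},\boldsymbol{\mu};\mathbf{K},M)=\sum_{i=1}^M\pi_i^{-1}\langle\mathbf{Y}-\boldsymbol{\mu},\boldsymbol{\psi}_i\rangle^2$. $\mathbf{e}_k$ is the $k$th canonical basis vector of $\mathbb{R}^p$. *)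

theory Defs
  imports "HOL-Analysis.Analysis" "HOL-Probability.Probability"
begin

text \<open>Multivariate functions x in H = L2(T)^p are represented as
  x :: nat \<Rightarrow> real \<Rightarrow> real, with x j t the j-th component at time t, j \<in> {1..p}.\<close>

definition sinner :: "real set \<Rightarrow> (real \<Rightarrow> real) \<Rightarrow> (real \<Rightarrow> real) \<Rightarrow> real" where
  "sinner T f g = integral T (\<lambda>t. f t * g t)"

definition Hinner :: "real set \<Rightarrow> nat \<Rightarrow> (nat \<Rightarrow> real \<Rightarrow> real) \<Rightarrow> (nat \<Rightarrow> real \<Rightarrow> real) \<Rightarrow> real" where
  "Hinner T p x y = (\<Sum>j=1..p. sinner T (x j) (y j))"

definition L2fun :: "real set \<Rightarrow> (real \<Rightarrow> real) \<Rightarrow> bool" where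
  "L2fun T f \<longleftrightarrow> f measurable_on T \<and> (\<lambda>t. (f t)\<^sup>2) integrable_on T"

definition inH :: "real set \<Rightarrow> nat \<Rightarrow> (nat \<Rightarrow> real \<Rightarrow> real) \<Rightarrow> bool" where
  "inH T p x \<longleftrightarrow> (\<forall>j\<in>{1..p}. L2fun T (x j))"

text \<open>Covariance operator with kernel K (K j l s t = Cov(X_j(s), X_l(t))).\<close>
definition cov_op :: "real set \<Rightarrow> nat \<Rightarrow> (nat \<Rightarrow> nat \<Rightarrow> real \<Rightarrow> real \<Rightarrow> real)
    \<Rightarrow> (nat \<Rightarrow> real \<Rightarrow> real) \<Rightarrow> nat \<Rightarrow> real \<Rightarrow> real" where
  "cov_op T p K x j s = (\<Sum>l=1..p. integral T (\<lambda>t. K j l s t * x l t))"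

definition is_eigenpair :: "real set \<Rightarrow> nat \<Rightarrow> (nat \<Rightarrow> nat \<Rightarrow> real \<Rightarrow> real \<Rightarrow> real)
    \<Rightarrow> real \<Rightarrow> (nat \<Rightarrow> real \<Rightarrow> real) \<Rightarrow> bool" where
  "is_eigenpair T p K lam phi \<longleftrightarrow> inH T p phi \<and> Hinner T p phi phi > 0 \<and>
     (\<forall>j\<in>{1..p}. \<forall>s\<in>T. cov_op T p K phi j s = lam * phi j s)"

definition top_eigenpairs :: "real set \<Rightarrow> nat \<Rightarrow> (nat \<Rightarrow> nat \<Rightarrow> real \<Rightarrow> real \<Rightarrow> real)
    \<Rightarrow> nat \<Rightarrow> (nat \<Rightarrow> real) \<Rightarrow> (nat \<Rightarrow> nat \<Rightarrow> real \<Rightarrow> real) \<Rightarrow> bool" where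
  "top_eigenpairs T p K M pe psi \<longleftrightarrow>
     (\<forall>i\<in>{1..M}. is_eigenpair T p K (pe i) (psi i)) \<and>
     (\<forall>i\<in>{1..M}. \<forall>i'\<in>{1..M}. Hinner T p (psi i) (psi i') = (if i = i' then 1 else 0)) \<and>
     (\<forall>i\<in>{1..M}. \<forall>i'\<in>{1..M}. i \<le> i' \<longrightarrow> pe i' \<le> pe i) \<and>
     (\<forall>lam phi. is_eigenpair T p K lam phi \<and> (\<forall>i\<in>{1..M}. Hinner T p phi (psi i) = 0)
        \<longrightarrow> lam \<le> pe M)"

definition fMMD2 :: "real set \<Rightarrow> nat \<Rightarrow> (nat \<Rightarrow> real \<Rightarrow> real) \<Rightarrow> (nat \<Rightarrow> real \<Rightarrow> real)
    \<Rightarrow> (nat \<Rightarrow> real) \<Rightarrow> (nat \<Rightarrow> nat \<Rightarrow> real \<Rightarrow> real) \<Rightarrow> nat \<Rightarrow> real" where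
  "fMMD2 T p Y mu pe psi M =
     (\<Sum>i=1..M. (1 / pe i) * (Hinner T p (\<lambda>j t. Y j t - mu j t) (psi i))\<^sup>2)"

definition Xhat :: "nat set \<Rightarrow> (nat \<Rightarrow> real \<Rightarrow> real) \<Rightarrow> (nat \<Rightarrow> real \<Rightarrow> real) \<Rightarrow> nat \<Rightarrow> real \<Rightarrow> real" where
  "Xhat S x mu = (\<lambda>j t. if j \<in> S then x j t else mu j t)"

definition shapley_fMMD :: "real set \<Rightarrow> nat \<Rightarrow> (nat \<Rightarrow> real \<Rightarrow> real) \<Rightarrow> (nat \<Rightarrow> real \<Rightarrow> real)
    \<Rightarrow> (nat \<Rightarrow> real) \<Rightarrow> (nat \<Rightarrow> nat \<Rightarrow> real \<Rightarrow> real) \<Rightarrow> nat \<Rightarrow> nat \<Rightarrow> real" where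
  "shapley_fMMD T p x mu pe psi M k =
     (\<Sum>S\<in>Pow ({1..p} - {k}).
        (fact (card S) * fact (p - card S - 1) / fact p) *
        (fMMD2 T p (Xhat (insert k S) x mu) mu pe psi M - fMMD2 T p (Xhat S x mu) mu pe psi M))"

end

theory Submission
  imports Defs
begin

(* Centred at the mean, the coordinates outside S drop out of every score
  \<langle>X\<^sup>S - \<mu>, \<psi>\<^sub>i\<rangle>, which becomes the additive sum of the
  c\<^sub>i\<^sub>j = \<langle>X\<^sub>j - \<mu>\<^sub>j, \<psi>\<^sub>i\<^sub>j\<rangle> over j in S. So the fMMD is a
  weighted sum of squares of additive games, and by linearity of the Shapley value it suffices that
  the Shapley value of S \<mapsto> (\<Sum>j\<in>S. c j)\<^sup>2 for player k is c k times the total sum: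
  the marginal contribution is c k\<^sup>2 + 2 c k \<Sum>j\<in>S. c j, the Shapley weights sum to 1, and by
  the symmetry S \<mapsto> N - S every other player lies in coalitions of total weight exactly 1/2.
  The identity is algebraic: of the hypotheses only k \<in> {1..p} is used. *)

definition shapley_weight :: "nat \<Rightarrow> nat \<Rightarrow> real" where
  "shapley_weight n s = fact s * fact (n - s) / fact (n + 1)"

text \<open>N is the set of players other than k.\<close>
definition shapley_value :: "'a set \<Rightarrow> ('a set \<Rightarrow> real) \<Rightarrow> 'a \<Rightarrow> real" where
  "shapley_value N v k = (\<Sum>S\<in>Pow N. shapley_weight (card N) (card S) * (v (insert k S) - v S))"

lemma sum_shapley_weight:
  assumes "finite N"
  shows "(\<Sum>S\<in>Pow N. shapley_weight (card N) (card S)) = 1"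
proof -
  let ?n = "card N"
  have "(\<Sum>S\<in>Pow N. shapley_weight ?n (card S)) =
        (\<Sum>s\<le>?n. \<Sum>S\<in>{S. S \<in> Pow N \<and> card S = s}. shapley_weight ?n (card S))"
    by (rule sum.group[symmetric]) (auto simp: assms card_mono)
  also have "\<dots> = (\<Sum>s\<le>?n. 1 / real (?n + 1))"
  proof (rule sum.cong[OF refl])
    fix s assume "s \<in> {..?n}"
    moreover have "(fact ?n :: real) + fact ?n * real ?n > 0"
      by (simp add: add_pos_nonneg)
    ultimately have "real (?n choose s) * shapley_weight ?n s = 1 / real (?n + 1)"
      by (simp add: shapley_weight_def binomial_fact fact_reduce[of "?n + 1"] field_simps)
    moreover have "(\<Sum>S\<in>{S. S \<in> Pow N \<and> card S = s}. shapley_weight ?n (card S))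
        = real (?n choose s) * shapley_weight ?n s"
      using n_subsets[OF assms, of s] by simp
    ultimately show "(\<Sum>S\<in>{S. S \<in> Pow N \<and> card S = s}. shapley_weight ?n (card S))
        = 1 / real (?n + 1)" by simp
  qed
  also have "\<dots> = 1" by simp
  finally show ?thesis .
qed

lemma sum_shapley_weight_containing:
  assumes "finite N" "j \<in> N"
  shows "(\<Sum>S\<in>{S\<in>Pow N. j \<in> S}. shapley_weight (card N) (card S)) = 1 / 2"
proof -
  let ?w = "\<lambda>S. shapley_weight (card N) (card S)"
  have complement: "(\<Sum>S\<in>{S\<in>Pow N. j \<in> S}. ?w S) = (\<Sum>S\<in>{S\<in>Pow N. j \<notin> S}. ?w S)"
  proof (rule sum.reindex_bij_witness[where i = "\<lambda>S. N - S" and j = "\<lambda>S. N - S"])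
    fix S assume "S \<in> {S\<in>Pow N. j \<in> S}"
    then have "card (N - S) = card N - card S" "card S \<le> card N"
      using assms by (auto simp: card_Diff_subset finite_subset card_mono)
    then show "?w (N - S) = ?w S" by (simp add: shapley_weight_def)
  qed (use assms in auto)
  have "(\<Sum>S\<in>Pow N. ?w S) = (\<Sum>S\<in>{S\<in>Pow N. j \<in> S} \<union> {S\<in>Pow N. j \<notin> S}. ?w S)"
    by (rule sum.cong) auto
  also have "\<dots> = (\<Sum>S\<in>{S\<in>Pow N. j \<in> S}. ?w S) + (\<Sum>S\<in>{S\<in>Pow N. j \<notin> S}. ?w S)"
    by (rule sum.union_disjoint) (use assms(1) in auto)
  finally have "(\<Sum>S\<in>Pow N. ?w S) = (\<Sum>S\<in>{S\<in>Pow N. j \<in> S}. ?w S) + (\<Sum>S\<in>{S\<in>Pow N. j \<notin> S}. ?w S)" .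
  with complement sum_shapley_weight[OF assms(1)] show ?thesis by simp
qed

lemma shapley_value_sum:
  "shapley_value N (\<lambda>S. \<Sum>i\<in>I. a i * v i S) k = (\<Sum>i\<in>I. a i * shapley_value N (v i) k)"
  unfolding shapley_value_def
  by (simp add: sum_subtractf[symmetric] right_diff_distrib sum_distrib_left mult.left_commute)
     (rule sum.swap)

lemma shapley_value_cong:
  assumes "\<And>S. S \<subseteq> insert k N \<Longrightarrow> v S = v' S"
  shows "shapley_value N v k = shapley_value N v' k"
proof -
  have "v (insert k S) - v S = v' (insert k S) - v' S" if "S \<subseteq> N" for S
    using that by (simp add: assms insert_mono subset_insertI2)
  then show ?thesis
    unfolding shapley_value_def by (intro sum.cong refl) simp
qed

lemma shapley_value_square_of_additive:
  fixes c :: "'a \<Rightarrow> real"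
  assumes "finite N" "k \<notin> N"
  shows "shapley_value N (\<lambda>S. (\<Sum>j\<in>S. c j)\<^sup>2) k = c k * (\<Sum>j\<in>insert k N. c j)"
proof -
  let ?w = "\<lambda>S. shapley_weight (card N) (card S)"
  have marginal: "(\<Sum>j\<in>insert k S. c j)\<^sup>2 - (\<Sum>j\<in>S. c j)\<^sup>2 = (c k)\<^sup>2 + 2 * c k * (\<Sum>j\<in>S. c j)"
    if "S \<in> Pow N" for S
  proof -
    from that assms have "finite S" "k \<notin> S"
      by (auto intro: finite_subset)
    then show ?thesis by (simp add: power2_eq_square algebra_simps)
  qed
  have "(\<Sum>S\<in>Pow N. ?w S * (\<Sum>j\<in>S. c j)) = (\<Sum>S\<in>Pow N. \<Sum>j\<in>{j. j \<in> N \<and> j \<in> S}. ?w S * c j)"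
    by (intro sum.cong) (auto simp: sum_distrib_left Int_absorb1 Collect_conj_eq)
  also have "\<dots> = (\<Sum>j\<in>N. c j * (\<Sum>S\<in>{S\<in>Pow N. j \<in> S}. ?w S))"
    using assms(1) by (subst sum.swap_restrict) (auto simp: sum_distrib_left mult.commute)
  also have "\<dots> = (\<Sum>j\<in>N. c j * (1 / 2))"
    by (rule sum.cong[OF refl]) (use sum_shapley_weight_containing[OF assms(1)] in simp)
  also have "\<dots> = (\<Sum>j\<in>N. c j) / 2"
    by (simp add: sum_divide_distrib)
  finally have weighted_additive: "(\<Sum>S\<in>Pow N. ?w S * (\<Sum>j\<in>S. c j)) = (\<Sum>j\<in>N. c j) / 2" .
  have "shapley_value N (\<lambda>S. (\<Sum>j\<in>S. c j)\<^sup>2) k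
      = (c k)\<^sup>2 * (\<Sum>S\<in>Pow N. ?w S) + 2 * c k * (\<Sum>S\<in>Pow N. ?w S * (\<Sum>j\<in>S. c j))"
    unfolding shapley_value_def
    by (simp add: marginal distrib_left sum.distrib sum_distrib_left sum_distrib_right mult_ac)
  also have "\<dots> = c k * (\<Sum>j\<in>insert k N. c j)"
    unfolding sum_shapley_weight[OF assms(1)] weighted_additive
    using assms by (simp add: power2_eq_square algebra_simps)
  finally show ?thesis .
qed

lemma Hinner_Xhat:
  assumes "S \<subseteq> {1..p}"
  shows "Hinner T p (\<lambda>j t. Xhat S x mu j t - mu j t) y = (\<Sum>j\<in>S. sinner T (\<lambda>t. x j t - mu j t) (y j))"
proof -
  have "Hinner T p (\<lambda>j t. Xhat S x mu j t - mu j t) y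
      = (\<Sum>j\<in>{1..p}. if j \<in> S then sinner T (\<lambda>t. x j t - mu j t) (y j) else 0)"
    unfolding Hinner_def by (rule sum.cong) (auto simp: Xhat_def sinner_def)
  with assms show ?thesis by (simp add: sum.If_cases Int_absorb1)
qed

lemma fMMD2_Xhat:
  assumes "S \<subseteq> {1..p}"
  shows "fMMD2 T p (Xhat S x mu) mu pe psi M
       = (\<Sum>i=1..M. (1 / pe i) * (\<Sum>j\<in>S. sinner T (\<lambda>t. x j t - mu j t) (psi i j))\<^sup>2)"
  using assms by (simp add: fMMD2_def Hinner_Xhat)

lemma shapley_fMMD_eq_shapley_value:
  assumes "k \<in> {1..p}"
  shows "shapley_fMMD T p x mu pe psi M k
       = shapley_value ({1..p} - {k}) (\<lambda>S. fMMD2 T p (Xhat S x mu) mu pe psi M) k"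
proof -
  have weight: "fact (card S) * fact (p - card S - 1) / fact p = shapley_weight (card ({1..p} - {k})) (card S)"
    if "S \<in> Pow ({1..p} - {k})" for S
  proof -
    from that have "card S \<le> p - 1"
      using assms card_mono[of "{1..p} - {k}" S] by auto
    with assms show ?thesis
      by (simp add: shapley_weight_def diff_commute)
  qed
  show ?thesis
    unfolding shapley_fMMD_def shapley_value_def by (intro sum.cong refl) (simp only: weight)
qed

theorem proposition3:
  fixes M :: "'w measure" and X :: "'w \<Rightarrow> nat \<Rightarrow> real \<Rightarrow> real"
    and a b :: real and p :: nat
    and mu :: "nat \<Rightarrow> real \<Rightarrow> real" and K :: "nat \<Rightarrow> nat \<Rightarrow> real \<Rightarrow> real \<Rightarrow> real"
    and Mn :: nat and pe :: "nat \<Rightarrow> real" and psi :: "nat \<Rightarrow> nat \<Rightarrow> real \<Rightarrow> real"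
  assumes "prob_space M"
    and "a < b" and "p \<ge> 1" and "Mn \<ge> 1"
    and rv: "\<And>j t. j \<in> {1..p} \<Longrightarrow> t \<in> {a..b} \<Longrightarrow> (\<lambda>w. X w j t) \<in> borel_measurable M"
    and L2: "\<And>j t. j \<in> {1..p} \<Longrightarrow> t \<in> {a..b} \<Longrightarrow> integrable M (\<lambda>w. (X w j t)\<^sup>2)"
    and L2cont: "\<And>j t. j \<in> {1..p} \<Longrightarrow> t \<in> {a..b} \<Longrightarrow>
        ((\<lambda>s. prob_space.expectation M (\<lambda>w. (X w j s - X w j t)\<^sup>2)) \<longlongrightarrow> 0) (at t within {a..b})"
    and mean: "\<And>j t. j \<in> {1..p} \<Longrightarrow> t \<in> {a..b} \<Longrightarrow>
        mu j t = prob_space.expectation M (\<lambda>w. X w j t)"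
    and cov: "\<And>j l s t. j \<in> {1..p} \<Longrightarrow> l \<in> {1..p} \<Longrightarrow> s \<in> {a..b} \<Longrightarrow> t \<in> {a..b} \<Longrightarrow>
        K j l s t = prob_space.expectation M (\<lambda>w. (X w j s - mu j s) * (X w l t - mu l t))"
    and eig: "top_eigenpairs {a..b} p K Mn pe psi"
    and pos: "pe Mn > 0"
    and k: "k \<in> {1..p}"
    and w: "w \<in> space M"
  shows "shapley_fMMD {a..b} p (X w) mu pe psi Mn k =
    (\<Sum>i=1..Mn. (1 / pe i) * sinner {a..b} (\<lambda>t. X w k t - mu k t) (psi i k)
                 * Hinner {a..b} p (\<lambda>j t. X w j t - mu j t) (psi i))"
proof -
  let ?N = "{1..p} - {k}"
  define c where "c i j = sinner {a..b} (\<lambda>t. X w j t - mu j t) (psi i j)" for i j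
  have "shapley_fMMD {a..b} p (X w) mu pe psi Mn k
      = shapley_value ?N (\<lambda>S. fMMD2 {a..b} p (Xhat S (X w) mu) mu pe psi Mn) k"
    using k by (rule shapley_fMMD_eq_shapley_value)
  also have "\<dots> = shapley_value ?N (\<lambda>S. \<Sum>i=1..Mn. (1 / pe i) * (\<Sum>j\<in>S. c i j)\<^sup>2) k"
  proof (rule shapley_value_cong)
    fix S assume "S \<subseteq> insert k ?N"
    with k have "S \<subseteq> {1..p}"
      by auto
    then show "fMMD2 {a..b} p (Xhat S (X w) mu) mu pe psi Mn = (\<Sum>i=1..Mn. (1 / pe i) * (\<Sum>j\<in>S. c i j)\<^sup>2)"
      by (simp add: fMMD2_Xhat c_def)
  qed
  also have "\<dots> = (\<Sum>i=1..Mn. (1 / pe i) * (c i k * (\<Sum>j\<in>insert k ?N. c i j)))"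
    unfolding shapley_value_sum by (simp add: shapley_value_square_of_additive)
  also have "insert k ?N = {1..p}"
    using k by auto
  finally show ?thesis
    by (simp add: c_def Hinner_def)
qed

end
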